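(* Let $\frac14\le a\le b$. For any $t\ge\frac1{10}$, \[ \mathcal{R}_I(t,a,b) = O\!\left(\frac{\sqrt b}{t}\right). \]
   Context: Write $a = \frac14+\alpha^2$, $b=\frac14+\beta^2$ with $0\le\alpha\le\beta$. For $t>0$ and $r\in\mathbb{C}$, $h_t(r) = \frac{t}{\sqrt\pi}\int_\alpha^\beta\exp(-t^2(r-\rho)^2)\,d\rho$, and \[ \mathcal{R}_I(t,a,b) = \frac{1}{4\pi}\int_0^{+\infty}\big(h_t(r)+h_t(-r) - \mathbf{1}_{[\alpha,\beta]}(r)\big)\,r\tanh(\pi r)\,dr. \] $T_1=O(T_2)$ means $|T_1|\le CT_2$ with a universal constant $C$ independent of $a,b,t$. *)

theory Defs
  imports "HOL-Analysis.Analysis"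
begin

definition spec_param :: "real \<Rightarrow> real" where
  "spec_param a = sqrt (a - 1/4)"

definition h_fun :: "real \<Rightarrow> real \<Rightarrow> real \<Rightarrow> real \<Rightarrow> real" where
  "h_fun t \<alpha> \<beta> r = t / sqrt pi * integral {\<alpha>..\<beta>} (\<lambda>\<rho>. exp (- (t\<^sup>2 * (r - \<rho>)\<^sup>2)))"

definition R_I :: "real \<Rightarrow> real \<Rightarrow> real \<Rightarrow> real" where
  "R_I t a b = (let \<alpha> = spec_param a; \<beta> = spec_param b in
     1 / (4 * pi) * integral {0..}
       (\<lambda>r. (h_fun t \<alpha> \<beta> r + h_fun t \<alpha> \<beta> (-r) - indicator {\<alpha>..\<beta>} r) * r * tanh (pi * r)))"

end

theory Submission
  imports Defs "HOL-Probability.Distributions" "HOL-Real_Asymp.Real_Asymp"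
begin

text \<open>
  Because exp(1/4) \<le> sqrt \<pi>, the Gaussian kernel t/sqrt \<pi> exp(-t^2 x^2) is dominated by the
  Laplace kernel t exp(-t|x|), whose integrals over half-lines are explicit. As the Gaussian
  kernel has total mass 1, this gives |h_t(r) - 1_[\<alpha>,\<beta>](r)| \<le> exp(-t|r-\<alpha>|) + exp(-t|r-\<beta>|),
  and h_t(-r) \<le> exp(-tr) for r \<ge> 0. Since |tanh| \<le> 1, the integrand of R_I is therefore
  dominated by r times three such exponentials, and the integral of r exp(-t|r-c|) over [0,\<infinity>)
  is at most 2c/t + 1/t^2. With \<alpha>, \<beta> \<le> sqrt b this gives |R_I| \<le> 4 sqrt b/t + 3/t^2, and
  the last term is at most 60 sqrt b/t once t \<ge> 1/10 and b \<ge> 1/4.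
\<close>

lemma has_integral_reflect_atLeast:
  fixes f :: "real \<Rightarrow> real"
  assumes f: "(f has_integral i) {c..}" and nonneg: "\<And>x. x \<ge> c \<Longrightarrow> 0 \<le> f x"
  shows "((\<lambda>x. f (- x)) has_integral i) {..-c}"
proof -
  have "f absolutely_integrable_on {c..}"
    using f nonneg by (intro nonnegative_absolutely_integrable_1) auto
  then have "(\<lambda>x. f (- x)) absolutely_integrable_on {..-c} \<and> integral {..-c} (\<lambda>x. f (- x)) = i"
    using has_absolute_integral_reflect_real[of "{..-c}" "{c..}" f] f
    by (auto simp: integral_unique)
  then show ?thesis
    using absolutely_integrable_on_def has_integral_integrable_integral by blast
qed

lemma has_integral_exp_abs_atLeast:
  fixes t r c :: real
  assumes "t > 0" "r \<le> c"
  shows "((\<lambda>\<rho>. t * exp (- t * \<bar>r - \<rho>\<bar>)) has_integral exp (- t * (c - r))) {c..}"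
proof -
  let ?g = "\<lambda>\<rho>. t * exp (t * r) * exp (- t * \<rho>)"
  have "(?g has_integral t * exp (t * r) * (exp (- t * c) / t)) {c..}"
    by (intro has_integral_mult_right has_integral_exp_minus_to_infinity assms)
  then show ?thesis
    using assms by (subst has_integral_cong[where g = ?g]) (auto simp: algebra_simps simp flip: exp_add)
qed

lemma has_integral_exp_abs_atMost:
  fixes t r c :: real
  assumes "t > 0" "c \<le> r"
  shows "((\<lambda>\<rho>. t * exp (- t * \<bar>r - \<rho>\<bar>)) has_integral exp (- t * (r - c))) {..c}"
proof -
  have "((\<lambda>\<rho>. t * exp (- t * \<bar>- r - - \<rho>\<bar>)) has_integral exp (- t * (- c - - r)))
      {..- (- c)}"
    by (rule has_integral_reflect_atLeast[OF has_integral_exp_abs_atLeast]) (use assms in auto)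
  then show ?thesis by (simp add: abs_minus_commute)
qed

lemma has_integral_mult_exp_minus_to_infinity:
  fixes a c :: real
  assumes "a > 0" "c \<ge> 0"
  shows "((\<lambda>x. x * exp (- a * x)) has_integral (c / a + 1 / a\<^sup>2) * exp (- a * c)) {c..}"
proof (intro has_integral_to_inf integrable_continuous_interval continuous_intros)
  define F where "F x = - (x / a + 1 / a\<^sup>2) * exp (- a * x)" for x
  have "((\<lambda>x. x * exp (- a * x)) has_integral (F y - F c)) {c..y}" if "c \<le> y" for y
    unfolding F_def using assms that
    by (intro fundamental_theorem_of_calculus)
       (auto intro!: derivative_eq_intros simp flip: has_real_derivative_iff_has_vector_derivative
             simp: field_simps power2_eq_square)
  then have "\<forall>\<^sub>F y in at_top. integral {c..y} (\<lambda>x. x * exp (- a * x)) = F y - F c"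
    by (auto simp: eventually_at_top_linorder intro: integral_unique)
  moreover have "((\<lambda>y. F y - F c) \<longlongrightarrow> (c / a + 1 / a\<^sup>2) * exp (- a * c)) at_top"
    unfolding F_def using assms by real_asymp (simp add: algebra_simps)
  ultimately show "((\<lambda>y. integral {c..y} (\<lambda>x. x * exp (- a * x)))
      \<longlongrightarrow> (c / a + 1 / a\<^sup>2) * exp (- a * c)) at_top"
    by (simp add: tendsto_cong)
qed (use assms in auto)

lemma has_integral_mult_exp_abs_le:
  fixes t c :: real
  assumes "t > 0" "c \<ge> 0"
  obtains I where "((\<lambda>r. r * exp (- t * \<bar>r - c\<bar>)) has_integral I) {0..}"
    and "I \<le> 2 * c / t + 1 / t\<^sup>2"
proof -
  let ?f = "\<lambda>r. r * exp (- t * \<bar>r - c\<bar>)" and ?e = "\<lambda>r. t * exp (- t * \<bar>c - r\<bar>)"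
  have f_int: "?f integrable_on {0..c}"
    by (intro integrable_continuous_interval continuous_intros)
  have e: "(?e has_integral 1) {..c}"
    using has_integral_exp_abs_atMost[OF assms(1) order_refl, of c] by simp
  have "integral {0..c} ?f \<le> integral {0..c} (\<lambda>r. c / t * ?e r)"
    using assms
    by (intro integral_le f_int integrable_continuous_interval continuous_intros)
       (auto simp: abs_minus_commute intro!: mult_right_mono)
  also have "\<dots> \<le> integral {..c} (\<lambda>r. c / t * ?e r)"
    using assms has_integral_mult_right[OF e, of "c / t"]
    by (intro integral_subset_le integrable_continuous_interval continuous_intros) auto
  also have "\<dots> = c / t"
    using has_integral_mult_right[OF e, of "c / t"] by (simp add: integral_unique)
  finally have left: "integral {0..c} ?f \<le> c / t" .
  have "((\<lambda>r. exp (t * c) * (r * exp (- t * r))) has_integral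
      exp (t * c) * ((c / t + 1 / t\<^sup>2) * exp (- t * c))) {c..}"
    by (intro has_integral_mult_right has_integral_mult_exp_minus_to_infinity assms)
  then have right: "(?f has_integral c / t + 1 / t\<^sup>2) {c..}"
    by (subst has_integral_cong[where g = "\<lambda>r. exp (t * c) * (r * exp (- t * r))"])
       (auto simp: algebra_simps simp flip: exp_add)
  have "(?f has_integral integral {0..c} ?f + (c / t + 1 / t\<^sup>2)) ({0..c} \<union> {c..})"
    using assms by (intro has_integral_Un integrable_integral f_int right) auto
  moreover have "{0..c} \<union> {c..} = {0..}"
    using assms by auto
  ultimately show ?thesis
    using left that by fastforce
qed

text \<open>No integrability of f is assumed: a non-integrable f has integral 0.\<close>

lemma abs_integral_le_of_dominated:
  fixes f g :: "real \<Rightarrow> real"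
  assumes g: "(g has_integral I) S" and dominated: "\<And>x. x \<in> S \<Longrightarrow> \<bar>f x\<bar> \<le> g x"
  shows "\<bar>integral S f\<bar> \<le> I"
proof (cases "f integrable_on S")
  case True
  have "norm (integral S f) \<le> integral S g"
    by (rule integral_norm_bound_integral[OF True]) (use g dominated in auto)
  then show ?thesis
    using g by (simp add: integral_unique)
next
  case False
  have "0 \<le> I"
    using g by (rule has_integral_nonneg) (use dominated in force)
  then show ?thesis
    using False by (simp add: not_integrable_integral)
qed

lemma exp_quarter_le_sqrt_pi: "exp (1/4 :: real) \<le> sqrt pi"
proof (rule power2_le_imp_le)
  have "(exp (1/4 :: real))\<^sup>2 = exp (1/2)"
    using exp_double[of "1/4 :: real"] by simp
  also have "\<dots> \<le> 2" by (rule exp_half_le2)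
  also have "2 \<le> (sqrt pi)\<^sup>2" using pi_gt3 by simp
  finally show "(exp (1/4))\<^sup>2 \<le> (sqrt pi)\<^sup>2" .
qed simp

definition gauss_kernel :: "real \<Rightarrow> real \<Rightarrow> real" where
  "gauss_kernel t x = t / sqrt pi * exp (- (t\<^sup>2 * x\<^sup>2))"

lemma gauss_kernel_nonneg: "t \<ge> 0 \<Longrightarrow> gauss_kernel t x \<ge> 0"
  by (simp add: gauss_kernel_def)

lemma gauss_kernel_le_exp_abs:
  assumes "t \<ge> 0"
  shows "gauss_kernel t x \<le> t * exp (- t * \<bar>x\<bar>)"
proof -
  have "- (t\<^sup>2 * x\<^sup>2) \<le> 1/4 - t * \<bar>x\<bar>"
    using zero_le_power2[of "t * \<bar>x\<bar> - 1/2"]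
    by (simp add: power2_eq_square algebra_simps)
  then have "exp (- (t\<^sup>2 * x\<^sup>2)) \<le> exp (1/4) * exp (- t * \<bar>x\<bar>)"
    by (simp flip: exp_add)
  also have "\<dots> \<le> sqrt pi * exp (- t * \<bar>x\<bar>)"
    using exp_quarter_le_sqrt_pi by (intro mult_right_mono) auto
  finally show ?thesis
    using assms by (simp add: gauss_kernel_def field_simps mult_left_mono)
qed

lemma gauss_kernel_has_integral:
  assumes "t > 0"
  shows "((\<lambda>\<rho>. gauss_kernel t (r - \<rho>)) has_integral 1) UNIV"
proof -
  define \<sigma> where "\<sigma> = 1 / (sqrt 2 * t)"
  have \<sigma>: "\<sigma> > 0" "\<sigma>\<^sup>2 = 1 / (2 * t\<^sup>2)"
    using assms by (simp_all add: \<sigma>_def power_divide power_mult_distrib)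
  have "normal_density r \<sigma> = (\<lambda>\<rho>. gauss_kernel t (r - \<rho>))"
    using assms
    by (auto simp: fun_eq_iff normal_density_def gauss_kernel_def \<sigma> real_sqrt_divide real_sqrt_mult
        power2_commute[of _ r])
  moreover have "(normal_density r \<sigma> has_integral 1) UNIV"
    using has_integral_integral_lborel[OF integrable_normal_density[OF \<sigma>(1)]]
      integral_normal_density[OF \<sigma>(1)] by simp
  ultimately show ?thesis by simp
qed

lemma h_fun_eq_integral_gauss_kernel:
  "h_fun t \<alpha> \<beta> r = integral {\<alpha>..\<beta>} (\<lambda>\<rho>. gauss_kernel t (r - \<rho>))"
  by (simp add: h_fun_def gauss_kernel_def)

lemma gauss_kernel_integrable_on_interval:
  "(\<lambda>\<rho>. gauss_kernel t (r - \<rho>)) integrable_on {\<alpha>..\<beta>}"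
  unfolding gauss_kernel_def by (intro integrable_continuous_interval continuous_intros)

lemma h_fun_nonneg: "t \<ge> 0 \<Longrightarrow> h_fun t \<alpha> \<beta> r \<ge> 0"
  unfolding h_fun_eq_integral_gauss_kernel
  by (intro integral_nonneg gauss_kernel_integrable_on_interval gauss_kernel_nonneg)

lemma h_fun_le_of_exp_abs_has_integral:
  assumes "t \<ge> 0" "{\<alpha>..\<beta>} \<subseteq> T"
    and majorant: "((\<lambda>\<rho>. t * exp (- t * \<bar>r - \<rho>\<bar>)) has_integral M) T"
  shows "h_fun t \<alpha> \<beta> r \<le> M"
proof -
  let ?g = "\<lambda>\<rho>. t * exp (- t * \<bar>r - \<rho>\<bar>)"
  have "h_fun t \<alpha> \<beta> r \<le> integral {\<alpha>..\<beta>} ?g"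
    unfolding h_fun_eq_integral_gauss_kernel
    using gauss_kernel_le_exp_abs[OF assms(1)]
    by (intro integral_le gauss_kernel_integrable_on_interval integrable_continuous_interval
        continuous_intros)
  also have "\<dots> \<le> integral T ?g"
    using majorant assms(1,2)
    by (intro integral_subset_le integrable_continuous_interval continuous_intros) auto
  also have "\<dots> = M"
    by (rule integral_unique[OF majorant])
  finally show ?thesis .
qed

lemma h_fun_le_exp_above:
  assumes "t > 0" "\<beta> \<le> r"
  shows "h_fun t \<alpha> \<beta> r \<le> exp (- t * (r - \<beta>))"
  using assms
  by (intro h_fun_le_of_exp_abs_has_integral[where T = "{..\<beta>}"] has_integral_exp_abs_atMost) auto

lemma h_fun_le_exp_below:
  assumes "t > 0" "r \<le> \<alpha>"
  shows "h_fun t \<alpha> \<beta> r \<le> exp (- t * (\<alpha> - r))"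
  using assms
  by (intro h_fun_le_of_exp_abs_has_integral[where T = "{\<alpha>..}"] has_integral_exp_abs_atLeast) auto

lemma h_fun_le_one:
  assumes "t > 0"
  shows "h_fun t \<alpha> \<beta> r \<le> 1"
proof (rule has_integral_le[OF _ gauss_kernel_has_integral[OF assms]])
  show "((\<lambda>\<rho>. if \<rho> \<in> {\<alpha>..\<beta>} then gauss_kernel t (r - \<rho>) else 0)
      has_integral h_fun t \<alpha> \<beta> r) UNIV"
    unfolding has_integral_restrict_UNIV h_fun_eq_integral_gauss_kernel
    by (rule integrable_integral[OF gauss_kernel_integrable_on_interval])
qed (use assms gauss_kernel_nonneg in auto)

lemma one_minus_h_fun_le:
  assumes "t > 0" "\<alpha> \<le> r" "r \<le> \<beta>"
  shows "1 - h_fun t \<alpha> \<beta> r \<le> exp (- t * (r - \<alpha>)) + exp (- t * (\<beta> - r))"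
proof -
  let ?k = "\<lambda>\<rho>. gauss_kernel t (r - \<rho>)" and ?e = "\<lambda>\<rho>. t * exp (- t * \<bar>r - \<rho>\<bar>)"
  have "1 \<le> h_fun t \<alpha> \<beta> r + exp (- t * (r - \<alpha>)) + exp (- t * (\<beta> - r))"
  proof (rule has_integral_le[OF gauss_kernel_has_integral[OF assms(1)]])
    have "((\<lambda>\<rho>. if \<rho> \<in> {\<alpha>..\<beta>} then ?k \<rho> else 0) has_integral h_fun t \<alpha> \<beta> r) UNIV"
      unfolding has_integral_restrict_UNIV h_fun_eq_integral_gauss_kernel
      by (rule integrable_integral[OF gauss_kernel_integrable_on_interval])
    moreover have "((\<lambda>\<rho>. if \<rho> \<in> {..\<alpha>} then ?e \<rho> else 0) has_integral exp (- t * (r - \<alpha>))) UNIV"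
      unfolding has_integral_restrict_UNIV using assms by (intro has_integral_exp_abs_atMost)
    moreover have "((\<lambda>\<rho>. if \<rho> \<in> {\<beta>..} then ?e \<rho> else 0) has_integral exp (- t * (\<beta> - r))) UNIV"
      unfolding has_integral_restrict_UNIV using assms by (intro has_integral_exp_abs_atLeast)
    ultimately show "((\<lambda>\<rho>. (if \<rho> \<in> {\<alpha>..\<beta>} then ?k \<rho> else 0) + (if \<rho> \<in> {..\<alpha>} then ?e \<rho> else 0)
        + (if \<rho> \<in> {\<beta>..} then ?e \<rho> else 0))
        has_integral h_fun t \<alpha> \<beta> r + exp (- t * (r - \<alpha>)) + exp (- t * (\<beta> - r))) UNIV"
      by (intro has_integral_add)
    show "?k \<rho> \<le> (if \<rho> \<in> {\<alpha>..\<beta>} then ?k \<rho> else 0) + (if \<rho> \<in> {..\<alpha>} then ?e \<rho> else 0)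
        + (if \<rho> \<in> {\<beta>..} then ?e \<rho> else 0)" for \<rho>
    proof -
      have "?k \<rho> \<le> ?e \<rho>" "0 \<le> ?e \<rho>"
        using gauss_kernel_le_exp_abs[of t "r - \<rho>"] assms(1) by simp_all
      then show ?thesis by auto
    qed
  qed
  then show ?thesis by linarith
qed

lemma abs_h_fun_minus_indicator_le:
  assumes "t > 0"
  shows "\<bar>h_fun t \<alpha> \<beta> r - indicator {\<alpha>..\<beta>} r\<bar>
    \<le> exp (- t * \<bar>r - \<alpha>\<bar>) + exp (- t * \<bar>r - \<beta>\<bar>)"
proof -
  have h: "0 \<le> h_fun t \<alpha> \<beta> r" "h_fun t \<alpha> \<beta> r \<le> 1"
    using assms by (auto intro: h_fun_nonneg h_fun_le_one)
  consider "r < \<alpha>" | "\<alpha> \<le> r" "r \<le> \<beta>" | "\<beta> < r" "\<alpha> \<le> r"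
    by linarith
  then show ?thesis
  proof cases
    case 1
    then show ?thesis
      using h h_fun_le_exp_below[OF assms, of r \<alpha> \<beta>] by (simp add: abs_le_iff add_increasing2)
  next
    case 2
    then show ?thesis
      using h one_minus_h_fun_le[OF assms, of \<alpha> r \<beta>] by (simp add: abs_le_iff)
  next
    case 3
    then show ?thesis
      using h h_fun_le_exp_above[OF assms, of \<beta> r \<alpha>] by (simp add: abs_le_iff add_increasing)
  qed
qed

lemma abs_R_I_integrand_le:
  assumes "t > 0" "0 \<le> \<alpha>" "0 \<le> r"
  shows "\<bar>(h_fun t \<alpha> \<beta> r + h_fun t \<alpha> \<beta> (- r) - indicator {\<alpha>..\<beta>} r) * r * tanh (pi * r)\<bar>
    \<le> r * exp (- t * \<bar>r - \<alpha>\<bar>) + r * exp (- t * \<bar>r - \<beta>\<bar>) + r * exp (- t * r)"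
proof -
  define D where "D = h_fun t \<alpha> \<beta> r + h_fun t \<alpha> \<beta> (- r) - indicator {\<alpha>..\<beta>} r"
  have "h_fun t \<alpha> \<beta> (- r) \<le> exp (- t * (\<alpha> - - r))"
    using assms by (intro h_fun_le_exp_below) auto
  also have "\<dots> \<le> exp (- t * r)"
    using assms by (simp add: mult_left_mono)
  finally have D: "\<bar>D\<bar> \<le> exp (- t * \<bar>r - \<alpha>\<bar>) + exp (- t * \<bar>r - \<beta>\<bar>) + exp (- t * r)"
    using abs_h_fun_minus_indicator_le[OF assms(1), of \<alpha> \<beta> r] h_fun_nonneg[of t \<alpha> \<beta> "- r"]
      assms(1)
    unfolding D_def by linarith
  have "\<bar>D * r * tanh (pi * r)\<bar> \<le> \<bar>D\<bar> * r"
    using assms(3) tanh_real_bounds[of "pi * r"]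
    by (simp add: abs_mult mult_left_le abs_le_iff)
  also have "\<dots> \<le> (exp (- t * \<bar>r - \<alpha>\<bar>) + exp (- t * \<bar>r - \<beta>\<bar>) + exp (- t * r)) * r"
    using D assms(3) by (rule mult_right_mono)
  finally show ?thesis
    unfolding D_def by (simp add: algebra_simps)
qed

lemma abs_R_I_le:
  assumes "1/4 \<le> a" "a \<le> b" "t > 0"
  shows "\<bar>R_I t a b\<bar> \<le> 4 * sqrt b / t + 3 / t\<^sup>2"
proof -
  define \<alpha> \<beta> where "\<alpha> = spec_param a" and "\<beta> = spec_param b"
  have \<alpha>: "0 \<le> \<alpha>" "\<alpha> \<le> sqrt b" and \<beta>: "0 \<le> \<beta>" "\<beta> \<le> sqrt b"
    using assms by (simp_all add: \<alpha>_def \<beta>_def spec_param_def)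
  obtain I\<^sub>\<alpha> where I\<^sub>\<alpha>: "((\<lambda>r. r * exp (- t * \<bar>r - \<alpha>\<bar>)) has_integral I\<^sub>\<alpha>) {0..}"
    "I\<^sub>\<alpha> \<le> 2 * \<alpha> / t + 1 / t\<^sup>2"
    using has_integral_mult_exp_abs_le[OF assms(3) \<alpha>(1)] .
  obtain I\<^sub>\<beta> where I\<^sub>\<beta>: "((\<lambda>r. r * exp (- t * \<bar>r - \<beta>\<bar>)) has_integral I\<^sub>\<beta>) {0..}"
    "I\<^sub>\<beta> \<le> 2 * \<beta> / t + 1 / t\<^sup>2"
    using has_integral_mult_exp_abs_le[OF assms(3) \<beta>(1)] .
  obtain I\<^sub>0 where I\<^sub>0': "((\<lambda>r. r * exp (- t * \<bar>r - 0\<bar>)) has_integral I\<^sub>0) {0..}"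
    "I\<^sub>0 \<le> 2 * 0 / t + 1 / t\<^sup>2"
    using has_integral_mult_exp_abs_le[OF assms(3) order_refl] .
  have I\<^sub>0: "((\<lambda>r. r * exp (- t * r)) has_integral I\<^sub>0) {0..}" "I\<^sub>0 \<le> 1 / t\<^sup>2"
    using I\<^sub>0' has_integral_cong[of "{0..}" "\<lambda>r. r * exp (- t * r)" "\<lambda>r. r * exp (- t * \<bar>r - 0\<bar>)"]
    by auto
  let ?F = "\<lambda>r. (h_fun t \<alpha> \<beta> r + h_fun t \<alpha> \<beta> (- r) - indicator {\<alpha>..\<beta>} r)
    * r * tanh (pi * r)"
  let ?g = "\<lambda>r. r * exp (- t * \<bar>r - \<alpha>\<bar>) + r * exp (- t * \<bar>r - \<beta>\<bar>)
    + r * exp (- t * r)"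
  have "\<bar>integral {0..} ?F\<bar> \<le> I\<^sub>\<alpha> + I\<^sub>\<beta> + I\<^sub>0"
  proof (rule abs_integral_le_of_dominated)
    show "(?g has_integral I\<^sub>\<alpha> + I\<^sub>\<beta> + I\<^sub>0) {0..}"
      by (intro has_integral_add I\<^sub>\<alpha>(1) I\<^sub>\<beta>(1) I\<^sub>0(1))
    show "\<bar>?F r\<bar> \<le> ?g r" if "r \<in> {0..}" for r
      using abs_R_I_integrand_le[OF assms(3) \<alpha>(1)] that by simp
  qed
  moreover have "\<bar>R_I t a b\<bar> = 1 / (4 * pi) * \<bar>integral {0..} ?F\<bar>"
    by (simp add: R_I_def Let_def \<alpha>_def \<beta>_def abs_mult)
  moreover have "1 / (4 * pi) * \<bar>integral {0..} ?F\<bar> \<le> \<bar>integral {0..} ?F\<bar>"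
    using pi_gt3 by (intro mult_left_le_one_le) auto
  moreover have "2 * \<alpha> / t + 2 * \<beta> / t \<le> 4 * sqrt b / t"
    unfolding add_divide_distrib[symmetric] using \<alpha> \<beta> assms(3) by (intro divide_right_mono) auto
  ultimately show ?thesis
    using I\<^sub>\<alpha>(2) I\<^sub>\<beta>(2) I\<^sub>0(2) by linarith
qed

theorem proposition4p2:
  shows "\<exists>C::real. \<forall>a b t::real. 1/4 \<le> a \<longrightarrow> a \<le> b \<longrightarrow> t \<ge> 1/10 \<longrightarrow>
           \<bar>R_I t a b\<bar> \<le> C * sqrt b / t"
proof (intro exI allI impI)
  fix a b t :: real
  assume a: "1/4 \<le> a" and ab: "a \<le> b" and t: "t \<ge> 1/10"
  have "1/2 \<le> sqrt b"
    using real_sqrt_le_mono[of "1/4" b] a ab by (simp add: real_sqrt_divide)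
  then have "1 \<le> (2 * sqrt b) * (10 * t)"
    using t a ab mult_mono[of 1 "2 * sqrt b" 1 "10 * t"] by simp
  then have "3 / t\<^sup>2 \<le> 60 * sqrt b / t"
    using t by (simp add: divide_simps power2_eq_square ac_simps)
  moreover have "\<bar>R_I t a b\<bar> \<le> 4 * sqrt b / t + 3 / t\<^sup>2"
    using abs_R_I_le[OF a ab] t by simp
  ultimately show "\<bar>R_I t a b\<bar> \<le> 64 * sqrt b / t"
    by (simp add: add_divide_distrib[symmetric])
qed

end
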